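(* Let $G=(V,E)$ be a finite simple undirected graph of bounded growth with maximum degree $\Delta$ and neighborhood independence bounded by a constant $c$, and let $R$ be an integer with $1\le R<\Delta$. Run the procedure Extended-VM on $G$ with parameter $R$. Then in every phase, each vertex of $V$ is selected by at most $O(\Delta c/R)$ vertices.
   Context: The neighborhood independence of $G$ is the maximum over $v$ of the size of an independent set contained in the neighbor set $\Gamma(v)$. $G$ has bounded growth if for every $r$ the number of pairwise independent vertices within distance $r$ of any vertex is bounded by a function of $r$ alone. Procedure Extended-VM$(G,R)$: compute a proper $(\Delta+1)$-coloring of $G$; partition the colors into $R$ super-classes, each consisting of $O(\Delta/R)$ colors (each vertex belongs to the super-class of its color); then perform $R$ phases in round-robin order, one per super-class $S$; in the phase of $S$, the vertices of $S$ are active, and each active vertex $v$ selects all its neighbors not in $S$, divides its backup data equally among them, and sends the parts to them. *)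

theory Defs
  imports Complex_Main
begin

definition simple_graph :: "'a set \<Rightarrow> ('a \<Rightarrow> 'a \<Rightarrow> bool) \<Rightarrow> bool" where
  "simple_graph V E \<longleftrightarrow> finite V \<and> (\<forall>u v. E u v \<longrightarrow> E v u) \<and> (\<forall>v. \<not> E v v)
      \<and> (\<forall>u v. E u v \<longrightarrow> u \<in> V \<and> v \<in> V)"

definition nbrs :: "'a set \<Rightarrow> ('a \<Rightarrow> 'a \<Rightarrow> bool) \<Rightarrow> 'a \<Rightarrow> 'a set" where
  "nbrs V E v = {u \<in> V. E v u}"

definition max_degree :: "'a set \<Rightarrow> ('a \<Rightarrow> 'a \<Rightarrow> bool) \<Rightarrow> nat" where
  "max_degree V E = Max ((\<lambda>v. card (nbrs V E v)) ` V)"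

definition independent :: "('a \<Rightarrow> 'a \<Rightarrow> bool) \<Rightarrow> 'a set \<Rightarrow> bool" where
  "independent E I \<longleftrightarrow> (\<forall>u\<in>I. \<forall>w\<in>I. \<not> E u w)"

definition nbr_independence_le :: "'a set \<Rightarrow> ('a \<Rightarrow> 'a \<Rightarrow> bool) \<Rightarrow> nat \<Rightarrow> bool" where
  "nbr_independence_le V E c \<longleftrightarrow>
     (\<forall>v\<in>V. \<forall>I. I \<subseteq> nbrs V E v \<and> independent E I \<longrightarrow> card I \<le> c)"

definition within_dist :: "('a \<Rightarrow> 'a \<Rightarrow> bool) \<Rightarrow> nat \<Rightarrow> 'a \<Rightarrow> 'a \<Rightarrow> bool" where
  "within_dist E r v u \<longleftrightarrow> (\<exists>k\<le>r. (E ^^ k) v u)"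

definition bounded_growth :: "'a set \<Rightarrow> ('a \<Rightarrow> 'a \<Rightarrow> bool) \<Rightarrow> (nat \<Rightarrow> nat) \<Rightarrow> bool" where
  "bounded_growth V E f \<longleftrightarrow>
     (\<forall>r. \<forall>v\<in>V. \<forall>I. I \<subseteq> {u \<in> V. within_dist E r v u} \<and> independent E I \<longrightarrow> card I \<le> f r)"

definition proper_coloring :: "'a set \<Rightarrow> ('a \<Rightarrow> 'a \<Rightarrow> bool) \<Rightarrow> nat \<Rightarrow> ('a \<Rightarrow> nat) \<Rightarrow> bool" where
  "proper_coloring V E D col \<longleftrightarrow>
     (\<forall>v\<in>V. col v \<le> D) \<and> (\<forall>u\<in>V. \<forall>v\<in>V. E u v \<longrightarrow> col u \<noteq> col v)"

text \<open>Vertices selecting w in the phase of super-class j (super-class map sc from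
 colors to 0..R-1): active vertices u (sc (col u) = j) adjacent to w with w not in
 the super-class.\<close>
definition selectors ::
  "'a set \<Rightarrow> ('a \<Rightarrow> 'a \<Rightarrow> bool) \<Rightarrow> ('a \<Rightarrow> nat) \<Rightarrow> (nat \<Rightarrow> nat) \<Rightarrow> nat \<Rightarrow> 'a \<Rightarrow> 'a set" where
  "selectors V E col sc j w =
     {u \<in> V. sc (col u) = j \<and> E u w \<and> sc (col w) \<noteq> j}"

end

theory Submission
  imports Defs
begin

text \<open>A vertex selecting w in the phase of super-class j is a neighbour of w whose colour
 lies in that super-class. Since the colouring is proper, each colour class inside the
 neighbourhood of w is independent and so has at most c vertices, and the super-class has
 O(\<Delta>/R) colours.\<close>

lemma proper_coloring_color_class_independent:
  assumes "proper_coloring V E D col" and "A \<subseteq> V"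
  shows "independent E {u \<in> A. col u = i}"
  using assms unfolding proper_coloring_def independent_def by fastforce

lemma card_nbrs_color_class_le:
  assumes "nbr_independence_le V E c" and "proper_coloring V E D col" and "w \<in> V"
  shows "card {u \<in> nbrs V E w. col u = i} \<le> c"
proof -
  have "independent E {u \<in> nbrs V E w. col u = i}"
    using assms(2) by (rule proper_coloring_color_class_independent) (auto simp: nbrs_def)
  moreover have "{u \<in> nbrs V E w. col u = i} \<subseteq> nbrs V E w"
    by blast
  ultimately show ?thesis
    using assms(1,3) unfolding nbr_independence_le_def by blast
qed

lemma selectors_subset_nbrs_color_classes:
  assumes "simple_graph V E" and "proper_coloring V E D col"
  shows "selectors V E col sc j w
           \<subseteq> (\<Union>i\<in>{i. i \<le> D \<and> sc i = j}. {u \<in> nbrs V E w. col u = i})"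
proof
  fix u
  assume "u \<in> selectors V E col sc j w"
  then have "u \<in> V" "sc (col u) = j" "E w u"
    using assms(1) unfolding selectors_def simple_graph_def by auto
  moreover have "col u \<le> D"
    using assms(2) \<open>u \<in> V\<close> unfolding proper_coloring_def by blast
  ultimately show "u \<in> (\<Union>i\<in>{i. i \<le> D \<and> sc i = j}. {u \<in> nbrs V E w. col u = i})"
    unfolding nbrs_def by blast
qed

lemma card_selectors_le:
  assumes "simple_graph V E" and "nbr_independence_le V E c"
    and "proper_coloring V E D col" and "w \<in> V"
  shows "card (selectors V E col sc j w) \<le> card {i. i \<le> D \<and> sc i = j} * c"
proof -
  let ?C = "{i. i \<le> D \<and> sc i = j}"
  let ?S = "\<lambda>i. {u \<in> nbrs V E w. col u = i}"
  have "finite V"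
    using assms(1) by (simp add: simple_graph_def)
  then have "finite (\<Union>i\<in>?C. ?S i)"
    by (simp add: nbrs_def)
  then have "card (selectors V E col sc j w) \<le> card (\<Union>i\<in>?C. ?S i)"
    using selectors_subset_nbrs_color_classes[OF assms(1,3)] by (rule card_mono)
  also have "\<dots> \<le> (\<Sum>i\<in>?C. card (?S i))"
    by (rule card_UN_le) simp
  also have "\<dots> \<le> (\<Sum>i\<in>?C. c)"
    using card_nbrs_color_class_le[OF assms(2,3,4)] by (rule sum_mono)
  finally show ?thesis
    by simp
qed
theorem lemma3:
  fixes V :: "'a set" and E :: "'a \<Rightarrow> 'a \<Rightarrow> bool"
    and f :: "nat \<Rightarrow> nat" and c R :: nat and K :: real
    and col :: "'a \<Rightarrow> nat" and sc :: "nat \<Rightarrow> nat"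
  assumes "simple_graph V E" and "V \<noteq> {}"
    and "bounded_growth V E f"
    and "nbr_independence_le V E c"
    and "1 \<le> R" and "R < max_degree V E"
    and "proper_coloring V E (max_degree V E) col"
    and "\<forall>i \<le> max_degree V E. sc i < R"
    and "\<forall>j < R. real (card {i. i \<le> max_degree V E \<and> sc i = j})
                    \<le> K * real (max_degree V E) / real R"
  shows "\<forall>j < R. \<forall>w \<in> V. real (card (selectors V E col sc j w))
            \<le> K * real (max_degree V E) * real c / real R"
proof (intro allI impI ballI)
  fix j w
  assume "j < R" and "w \<in> V"
  let ?D = "max_degree V E"
  have "real (card (selectors V E col sc j w))
          \<le> real (card {i. i \<le> ?D \<and> sc i = j}) * real c"
    using card_selectors_le[OF assms(1,4,7) \<open>w \<in> V\<close>] by (metis of_nat_le_iff of_nat_mult)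
  also have "\<dots> \<le> K * real ?D / real R * real c"
    using assms(9) \<open>j < R\<close> by (intro mult_right_mono) auto
  finally show "real (card (selectors V E col sc j w)) \<le> K * real ?D * real c / real R"
    by simp
qed

end
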